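(* Let $\mu,\nu\in\mathcal{P}(\mathcal{X})$, $0<m_1\le m_2<\infty$, $K:\mathcal{X}\times\mathcal{X}\to(0,1]$ measurable, and let $(\alpha_1,\tilde\alpha_1)$, $(\alpha_2,\tilde\alpha_2)$ be pairs of tail functions (with $\mu(B_{m_1})>0$, $\nu(B_{m_1})>0$, $\alpha_1,\alpha_2>0$). Assume $\int g\,d\nu>0$ for all $g\in\mathcal{G}^{\nu}_{\alpha_2,\tilde\alpha_2}\setminus\{0\}$ and \[ \inf_{f\in\mathcal{F}^{\mu,norm}_{\alpha_1,\tilde\alpha_1}}\inf_{g\in\mathcal{G}^{\nu,norm}_{\alpha_2,\tilde\alpha_2}}\int L_{K^\top,\nu}(g)f\,d\mu>0,\qquad \sup_{f\in\mathcal{F}^{\mu,norm}_{\alpha_1,\tilde\alpha_1}}\sup_{g\in\mathcal{G}^{\nu,norm}_{\alpha_2,\tilde\alpha_2}}\int L_{K^\top,\nu}(g)f\,d\mu<\infty . \] Then $L_{K^\top,\nu}$ is a strict contraction from $(\mathcal{G}^{\nu}_{\alpha_2,\tilde\alpha_2}\setminus\{0\},d_{\mathcal{G}^{\nu}_{\alpha_2,\tilde\alpha_2}})$ into $(\mathcal{G}^{\mu}_{\alpha_1,\tilde\alpha_1},d_{\mathcal{G}^{\mu}_{\alpha_1,\tilde\alpha_1}})$, i.e., there is $\kappa\in(0,1)$ with $d_{\mathcal{G}^{\mu}_{\alpha_1,\tilde\alpha_1}}(L_{K^\top,\nu}g,L_{K^\top,\nu}\tilde g)\le\kappa\, d_{\mathcal{G}^{\nu}_{\alpha_2,\tilde\alpha_2}}(g,\tilde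 g)$ for all $g,\tilde g\in\mathcal{G}^{\nu}_{\alpha_2,\tilde\alpha_2}\setminus\{0\}$.
   Context: $\mathcal{X}$ is a Polish space with metric $d_{\mathcal{X}}$, $x_0$ fixed, $B_r=\{x:d_{\mathcal{X}}(x_0,x)\le r\}$, $B_r^{\mathsf c}=\mathcal{X}\setminus B_r$. $L_{K^\top,\nu}g(x)=\int K(y,x)g(y)\,\nu(dy)$. A tail function is a non-increasing $\alpha:(0,\infty)\to[0,\infty)$ with $\lim_{r\to\infty}\alpha(r)=0$. For $\rho\in\mathcal{P}(\mathcal{X})$: $\mathcal{F}^{\rho}_{\alpha,\tilde\alpha}$ is the set of $f\in L^2(\rho)$ with $f\mathbf 1_{B_{m_2}}\ge0$ $\rho$-a.s., $\int_{B_r^{\mathsf c}}f_+\,d\rho\le\alpha(r)\int f\,d\rho$ for all $r\ge m_1$, $\int_{B_r^{\mathsf c}}f_-\,d\rho\le\tilde\alpha(r)\int f\,d\rho$ for all $r\ge m_2$; $\mathcal{G}^{\rho}_{\alpha,\tilde\alpha}=\{g\in L^2(\rho):\int fg\,d\rho\ge0\ \forall f\in\mathcal{F}^{\rho}_{\alpha,\tilde\alpha}\}$; superscript $norm$ denotes elements with $\int\cdot\,d\rho=1$. Hilbert's metric for a cone $C$: $f\le_C g$ iff $g-f\in C$; $f\sim_C g$ iff $f\le_C bg$ and $g\le_C b'f$ for some $b,b'>0$; $M(f,g)=\inf\{b>0:bg-f\in C\}$, $m(f,g)=\sup\{a>0:f-ag\in C\}$; $d_C(f,g)=\log(M/m)$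 if $f\sim_C g$, $g\ne0$, and $\infty$ otherwise. *)

theory Defs
  imports "HOL-Probability.Probability"
begin

definition Bclosed :: "'a::metric_space \<Rightarrow> real \<Rightarrow> 'a set" where
  "Bclosed x0 r = {x. dist x0 x \<le> r}"

definition tail_fun :: "(real \<Rightarrow> real) \<Rightarrow> bool" where
  "tail_fun \<alpha> \<longleftrightarrow> (\<forall>r s. 0 < r \<longrightarrow> r \<le> s \<longrightarrow> \<alpha> s \<le> \<alpha> r)
     \<and> (\<forall>r>0. 0 \<le> \<alpha> r) \<and> (\<alpha> \<longlongrightarrow> 0) at_top"

text \<open>Membership in L^2(rho) (for functions; cones below are closed under a.e. equality).\<close>
definition L2 :: "'a measure \<Rightarrow> ('a \<Rightarrow> real) \<Rightarrow> bool" where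
  "L2 \<rho> f \<longleftrightarrow> f \<in> borel_measurable \<rho> \<and> integrable \<rho> (\<lambda>x. (f x)\<^sup>2)"

definition Fcone :: "'a::metric_space \<Rightarrow> real \<Rightarrow> real \<Rightarrow> 'a measure \<Rightarrow> (real \<Rightarrow> real) \<Rightarrow> (real \<Rightarrow> real)
    \<Rightarrow> ('a \<Rightarrow> real) set" where
  "Fcone x0 m1 m2 \<rho> \<alpha> \<alpha>' = {f. L2 \<rho> f
     \<and> (AE x in \<rho>. x \<in> Bclosed x0 m2 \<longrightarrow> 0 \<le> f x)
     \<and> (\<forall>r\<ge>m1. (\<integral>x\<in>(space \<rho> - Bclosed x0 r). max (f x) 0 \<partial>\<rho>) \<le> \<alpha> r * (\<integral>x. f x \<partial>\<rho>))
     \<and> (\<forall>r\<ge>m2. (\<integral>x\<in>(space \<rho> - Bclosed x0 r). max (- f x) 0 \<partial>\<rho>) \<le> \<alpha>' r * (\<integral>x. f x \<partial>\<rho>))}"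

definition Gcone :: "'a::metric_space \<Rightarrow> real \<Rightarrow> real \<Rightarrow> 'a measure \<Rightarrow> (real \<Rightarrow> real) \<Rightarrow> (real \<Rightarrow> real)
    \<Rightarrow> ('a \<Rightarrow> real) set" where
  "Gcone x0 m1 m2 \<rho> \<alpha> \<alpha>' = {g. L2 \<rho> g
     \<and> (\<forall>f\<in>Fcone x0 m1 m2 \<rho> \<alpha> \<alpha>'. 0 \<le> (\<integral>x. f x * g x \<partial>\<rho>))}"

definition normed :: "'a measure \<Rightarrow> ('a \<Rightarrow> real) set \<Rightarrow> ('a \<Rightarrow> real) set" where
  "normed \<rho> C = {f\<in>C. (\<integral>x. f x \<partial>\<rho>) = 1}"

definition nonzero :: "'a measure \<Rightarrow> ('a \<Rightarrow> real) set \<Rightarrow> ('a \<Rightarrow> real) set" where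
  "nonzero \<rho> C = {g\<in>C. \<not> (AE x in \<rho>. g x = 0)}"

definition LKT :: "('a \<Rightarrow> 'a \<Rightarrow> real) \<Rightarrow> 'a measure \<Rightarrow> ('a \<Rightarrow> real) \<Rightarrow> 'a \<Rightarrow> real" where
  "LKT K \<nu> g = (\<lambda>x. \<integral>y. K y x * g y \<partial>\<nu>)"

definition cone_le :: "('a \<Rightarrow> real) set \<Rightarrow> ('a \<Rightarrow> real) \<Rightarrow> ('a \<Rightarrow> real) \<Rightarrow> bool" where
  "cone_le C f g \<longleftrightarrow> (\<lambda>x. g x - f x) \<in> C"

definition cone_equiv :: "('a \<Rightarrow> real) set \<Rightarrow> ('a \<Rightarrow> real) \<Rightarrow> ('a \<Rightarrow> real) \<Rightarrow> bool" where
  "cone_equiv C f g \<longleftrightarrow> (\<exists>b>0. \<exists>b'>0. cone_le C f (\<lambda>x. b * g x) \<and> cone_le C g (\<lambda>x. b' * f x))"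

definition hM :: "('a \<Rightarrow> real) set \<Rightarrow> ('a \<Rightarrow> real) \<Rightarrow> ('a \<Rightarrow> real) \<Rightarrow> real" where
  "hM C f g = Inf {b. b > 0 \<and> (\<lambda>x. b * g x - f x) \<in> C}"

definition hm :: "('a \<Rightarrow> real) set \<Rightarrow> ('a \<Rightarrow> real) \<Rightarrow> ('a \<Rightarrow> real) \<Rightarrow> real" where
  "hm C f g = Sup {a. a > 0 \<and> (\<lambda>x. f x - a * g x) \<in> C}"

definition hilbert_dist :: "'a measure \<Rightarrow> ('a \<Rightarrow> real) set \<Rightarrow> ('a \<Rightarrow> real) \<Rightarrow> ('a \<Rightarrow> real) \<Rightarrow> ereal" where
  "hilbert_dist \<rho> C f g =
     (if cone_equiv C f g \<and> \<not> (AE x in \<rho>. g x = 0) then ereal (ln (hM C f g / hm C f g)) else \<infinity>)"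

end

theory Submission
  imports Defs
begin

(* For u in G_nu and f in F_mu, the bounds c1, c2 on the normalised pairing give
   c1 (int u) (int f) <= int (L u) f <= c2 (int u) (int f).  If a g' <= g <= b g' in G_nu, applying
   this to g - a g' and b g' - g traps int (L g) f / int (L g') f, uniformly in f, between two
   weighted means alpha <= beta of a and b.  As G_mu is the dual cone of F_mu, this says
   alpha L g' <= L g <= beta L g' in G_mu, and Birkhoff's elementary inequality gives
   ln (beta / alpha) <= (1 - c1^2 / (2 c2^2)) ln (b / a).  Optimising over a and b yields the
   contraction of Hilbert's metric. *)

section \<open>Birkhoff's ratio inequality\<close>

lemma ln_one_plus_diff_le:
  fixes x y k r :: real
  assumes "0 < x" "0 < y" "0 \<le> k" "(1 - k) * x \<le> y" "1 \<le> r"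
  shows "ln (1 + x * r) - ln (1 + y * r) - k * ln r \<le> ln (1 + x) - ln (1 + y)"
proof -
  define \<phi> where "\<phi> z = ln (1 + x * z) - ln (1 + y * z) - k * ln z" for z :: real
  have "\<phi> r \<le> \<phi> 1"
  proof (rule DERIV_nonpos_imp_nonincreasing[OF \<open>1 \<le> r\<close>])
    fix z :: real assume z: "1 \<le> z" "z \<le> r"
    have pos: "0 < 1 + x * z" "0 < 1 + y * z" using assms z by (auto intro!: add_pos_nonneg)
    have "DERIV \<phi> z :> x / (1 + x * z) - y / (1 + y * z) - k / z"
      unfolding \<phi>_def using pos z by (auto intro!: derivative_eq_intros)
    moreover have "x / (1 + x * z) - y / (1 + y * z) - k / z \<le> 0"
    proof -
      have "z * (x - y) \<le> z * (k * x)"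
        using assms z by (intro mult_left_mono) (auto simp: algebra_simps)
      also have "\<dots> \<le> k * ((1 + x * z) * (1 + y * z))"
        using assms z pos by (auto simp: algebra_simps intro!: mult_left_mono)
      finally have "(x - y) / ((1 + x * z) * (1 + y * z)) \<le> k / z"
        using pos z by (simp add: pos_divide_le_eq mult.commute le_divide_eq)
      moreover have "x / (1 + x * z) - y / (1 + y * z) = (x - y) / ((1 + x * z) * (1 + y * z))"
        using pos by (simp add: field_simps)
      ultimately show ?thesis by simp
    qed
    ultimately show "\<exists>d. DERIV \<phi> z :> d \<and> d \<le> 0" by blast
  qed
  then show ?thesis unfolding \<phi>_def by simp
qed

lemma birkhoff_ln_ratio_le:
  fixes c1 c2 t w a b :: real
  assumes "0 < c1" "c1 \<le> c2" "0 \<le> t" "0 \<le> w" "0 < t + w" "0 < a" "a \<le> b"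
  shows "ln ((a * c1 * w + b * c2 * t) / (c1 * w + c2 * t))
           - ln ((a * c2 * w + b * c1 * t) / (c2 * w + c1 * t))
         \<le> (1 - c1\<^sup>2 / (2 * c2\<^sup>2)) * (ln b - ln a)"
proof -
  define k where "k = 1 - c1\<^sup>2 / (2 * c2\<^sup>2)"
  have c2: "0 < c2" using assms by linarith
  have "c1\<^sup>2 \<le> 2 * c2\<^sup>2" using power_mono[of c1 c2 2] assms zero_le_power2[of c2] by linarith
  then have k: "0 \<le> k" unfolding k_def using c2 by (simp add: field_simps)
  have rhs: "0 \<le> k * (ln b - ln a)" using k assms by simp
  consider "w = 0" | "t = 0" | "0 < t" "0 < w" using assms by linarith
  then show ?thesis
  proof cases
    case 1
    then show ?thesis using rhs assms c2 unfolding k_def by simp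
  next
    case 2
    then show ?thesis using rhs assms c2 unfolding k_def by simp
  next
    case 3
    define x where "x = c2 * t / (c1 * w)"
    define y where "y = c1 * t / (c2 * w)"
    define r where "r = b / a"
    have x: "0 < x" and y: "0 < y" and r: "1 \<le> r"
      unfolding x_def y_def r_def using 3 assms c2 by auto
    have "(1 - k) * x = y / 2" unfolding k_def x_def y_def using assms c2 3
      by (simp add: field_simps power2_eq_square)
    then have kxy: "(1 - k) * x \<le> y" using y by linarith
    have "1 + x * r = (a * c1 * w + b * c2 * t) / (a * c1 * w)"
      "1 + x = (c1 * w + c2 * t) / (c1 * w)"
      "1 + y * r = (a * c2 * w + b * c1 * t) / (a * c2 * w)" "1 + y = (c2 * w + c1 * t) / (c2 * w)"
      unfolding x_def y_def r_def using assms c2 3 by (simp_all add: field_simps)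
    then have "ln ((a * c1 * w + b * c2 * t) / (c1 * w + c2 * t))
          - ln ((a * c2 * w + b * c1 * t) / (c2 * w + c1 * t))
        = ln (a * ((1 + x * r) / (1 + x))) - ln (a * ((1 + y * r) / (1 + y)))"
      using assms c2 3 by simp
    also have "\<dots> = ln (1 + x * r) - ln (1 + y * r) - (ln (1 + x) - ln (1 + y))"
    proof -
      have "0 < 1 + x * r" "0 < 1 + y * r" "0 < 1 + x" "0 < 1 + y"
        using x y r by (simp_all add: add_pos_pos)
      then show ?thesis using assms by (simp add: ln_mult ln_div)
    qed
    also have "\<dots> \<le> k * ln r" using ln_one_plus_diff_le[OF x y k kxy r] by linarith
    also have "ln r = ln b - ln a" unfolding r_def using assms by (simp add: ln_div)
    finally show ?thesis unfolding k_def .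
  qed
qed

lemma birkhoff_ratio_bounds:
  fixes c1 c2 a b t w :: real
  assumes c: "0 < c1" "c1 \<le> c2" and ab: "0 < a" "a \<le> b" and tw: "0 \<le> t" "0 \<le> w"
    and gap: "a < b \<Longrightarrow> 0 < t + w"
  obtains \<alpha> \<beta> where "0 < \<alpha>" "ln \<beta> - ln \<alpha> \<le> (1 - c1\<^sup>2 / (2 * c2\<^sup>2)) * (ln b - ln a)"
    and "\<And>p q s. 0 \<le> s \<Longrightarrow> c1 * t * s \<le> p - a * q \<Longrightarrow> p - a * q \<le> c2 * t * s
           \<Longrightarrow> c1 * w * s \<le> b * q - p \<Longrightarrow> b * q - p \<le> c2 * w * s \<Longrightarrow> \<alpha> * q \<le> p \<and> p \<le> \<beta> * q"
proof (cases "a = b")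
  case True
  have "0 \<le> c1 * t * s" "0 \<le> c1 * w * s" if "0 \<le> s" for s using c tw that by simp_all
  with True have "a * q \<le> p \<and> p \<le> a * q"
    if "0 \<le> s" "c1 * t * s \<le> p - a * q" "c1 * w * s \<le> b * q - p" for p q s
    using that by fastforce
  then show ?thesis using that[of a a] ab True by auto
next
  case False
  have c2: "0 < c2" using c by linarith
  have t_w: "0 < t + w" using gap False ab by simp
  \<comment> \<open>the extreme values of \<open>p / q\<close> allowed by the two sandwich constraints\<close>
  define \<alpha> where "\<alpha> = (a * c2 * w + b * c1 * t) / (c2 * w + c1 * t)"
  define \<beta> where "\<beta> = (a * c1 * w + b * c2 * t) / (c1 * w + c2 * t)"
  have den: "0 < c2 * w + c1 * t" "0 < c1 * w + c2 * t"
    using c c2 tw t_w by (smt (verit) mult_pos_pos mult_nonneg_nonneg)+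
  have "0 < a * c2 * w + b * c1 * t"
    using c c2 ab tw t_w by (smt (verit) mult_pos_pos mult_nonneg_nonneg)
  then have "0 < \<alpha>" unfolding \<alpha>_def using den by simp
  moreover have "ln \<beta> - ln \<alpha> \<le> (1 - c1\<^sup>2 / (2 * c2\<^sup>2)) * (ln b - ln a)"
    unfolding \<alpha>_def \<beta>_def using birkhoff_ln_ratio_le[OF c tw t_w ab] .
  moreover have "\<alpha> * q \<le> p \<and> p \<le> \<beta> * q"
    if "0 \<le> s" and t1: "c1 * t * s \<le> p - a * q" and t2: "p - a * q \<le> c2 * t * s"
      and w1: "c1 * w * s \<le> b * q - p" and w2: "b * q - p \<le> c2 * w * s" for p q s
  proof
    have "c1 * t * (b * q - p) \<le> c1 * t * (c2 * w * s)"
      using w2 c tw by (intro mult_left_mono) auto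
    also have "\<dots> = (c1 * t * s) * (c2 * w)" by (simp add: algebra_simps)
    also have "\<dots> \<le> (p - a * q) * (c2 * w)" using t1 c2 tw by (intro mult_right_mono) auto
    finally have "(a * c2 * w + b * c1 * t) * q \<le> p * (c2 * w + c1 * t)"
      by (simp add: algebra_simps)
    then show "\<alpha> * q \<le> p"
      unfolding \<alpha>_def using den by (simp add: pos_divide_le_eq mult.commute mult.left_commute)
  next
    have "(p - a * q) * (c1 * w) \<le> (c2 * t * s) * (c1 * w)"
      using t2 c tw by (intro mult_right_mono) auto
    also have "\<dots> = c2 * t * (c1 * w * s)" by (simp add: algebra_simps)
    also have "\<dots> \<le> c2 * t * (b * q - p)" using w1 c2 tw by (intro mult_left_mono) auto
    finally have "p * (c1 * w + c2 * t) \<le> (a * c1 * w + b * c2 * t) * q"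
      by (simp add: algebra_simps)
    then show "p \<le> \<beta> * q"
      unfolding \<beta>_def using den by (simp add: pos_le_divide_eq mult.commute mult.left_commute)
  qed
  ultimately show ?thesis using that by blast
qed

section \<open>Hilbert's projective metric\<close>

lemma cone_equivI:
  assumes scale: "\<And>c u. 0 < c \<Longrightarrow> u \<in> C \<Longrightarrow> (\<lambda>x. c * u x) \<in> C"
    and "0 < \<alpha>" "(\<lambda>x. h x - \<alpha> * h' x) \<in> C" and "0 < \<beta>" "(\<lambda>x. \<beta> * h' x - h x) \<in> C"
  shows "cone_equiv C h h'"
proof -
  have "(\<lambda>x. 1 / \<alpha> * (h x - \<alpha> * h' x)) \<in> C" by (rule scale) (use assms in auto)
  moreover have "(\<lambda>x. 1 / \<alpha> * (h x - \<alpha> * h' x)) = (\<lambda>x. 1 / \<alpha> * h x - h' x)"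
    using \<open>0 < \<alpha>\<close> by (auto simp: field_simps)
  ultimately have "(\<lambda>x. 1 / \<alpha> * h x - h' x) \<in> C" by simp
  moreover have "0 < 1 / \<alpha>" using \<open>0 < \<alpha>\<close> by simp
  ultimately show ?thesis unfolding cone_equiv_def cone_le_def using assms(4,5) by blast
qed

lemma cone_equivE:
  assumes scale: "\<And>c u. 0 < c \<Longrightarrow> u \<in> C \<Longrightarrow> (\<lambda>x. c * u x) \<in> C"
    and "cone_equiv C g g'"
  obtains a b where "0 < a" "(\<lambda>x. g x - a * g' x) \<in> C" "0 < b" "(\<lambda>x. b * g' x - g x) \<in> C"
proof -
  obtain b b' where b: "0 < b" "(\<lambda>x. b * g' x - g x) \<in> C"
    and b': "0 < b'" "(\<lambda>x. b' * g x - g' x) \<in> C"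
    using assms(2) unfolding cone_equiv_def cone_le_def by blast
  have "(\<lambda>x. 1 / b' * (b' * g x - g' x)) \<in> C" by (rule scale) (use b' in auto)
  moreover have "(\<lambda>x. 1 / b' * (b' * g x - g' x)) = (\<lambda>x. g x - 1 / b' * g' x)"
    using b' by (auto simp: field_simps)
  ultimately show ?thesis using that[of "1 / b'" b] b b' by simp
qed

lemma hilbert_dist_le_ln_ratio:
  assumes scale: "\<And>c u. 0 < c \<Longrightarrow> u \<in> C \<Longrightarrow> (\<lambda>x. c * u x) \<in> C"
    and nz: "\<not> (AE x in \<rho>. h' x = 0)"
    and \<alpha>: "0 < \<alpha>" "(\<lambda>x. h x - \<alpha> * h' x) \<in> C" and \<beta>: "(\<lambda>x. \<beta> * h' x - h x) \<in> C"
    and lower: "\<And>a. (\<lambda>x. h x - a * h' x) \<in> C \<Longrightarrow> a \<le> r"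
    and upper: "\<And>b. (\<lambda>x. b * h' x - h x) \<in> C \<Longrightarrow> r \<le> b"
  shows "hilbert_dist \<rho> C h h' \<le> ereal (ln \<beta> - ln \<alpha>)"
proof -
  define U where "U = {b. b > 0 \<and> (\<lambda>x. b * h' x - h x) \<in> C}"
  define L where "L = {a. a > 0 \<and> (\<lambda>x. h x - a * h' x) \<in> C}"
  have r: "\<alpha> \<le> r" "r \<le> \<beta>" using lower[OF \<alpha>(2)] upper[OF \<beta>] .
  then have "\<beta> \<in> U" unfolding U_def using \<alpha> \<beta> by simp
  have "\<alpha> \<in> L" unfolding L_def using \<alpha> by simp
  have "r \<le> Inf U"
    by (rule cInf_greatest) (use \<open>\<beta> \<in> U\<close> upper in \<open>auto simp: U_def\<close>)
  have "Inf U \<le> \<beta>"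
    by (rule cInf_lower[OF \<open>\<beta> \<in> U\<close>], rule bdd_belowI[of _ 0]) (simp add: U_def)
  have "\<alpha> \<le> Sup L"
    by (rule cSup_upper[OF \<open>\<alpha> \<in> L\<close>], rule bdd_aboveI[of _ r]) (auto simp: L_def intro: lower)
  have "cone_equiv C h h'"
    by (rule cone_equivI[OF scale \<alpha>]) (use \<beta> r \<alpha> in auto)
  then have "hilbert_dist \<rho> C h h' = ereal (ln (Inf U / Sup L))"
    using nz unfolding hilbert_dist_def hM_def hm_def U_def L_def by simp
  also have "ln (Inf U / Sup L) \<le> ln (\<beta> / \<alpha>)"
  proof (rule ln_mono)
    show "0 < Inf U / Sup L" using \<open>r \<le> Inf U\<close> \<open>\<alpha> \<le> Sup L\<close> r \<alpha> by simp
    show "Inf U / Sup L \<le> \<beta> / \<alpha>"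
      using \<open>Inf U \<le> \<beta>\<close> \<open>\<alpha> \<le> Sup L\<close> r \<alpha> by (intro frac_le) simp_all
  qed
  also have "ln (\<beta> / \<alpha>) = ln \<beta> - ln \<alpha>" using r \<alpha> by (simp add: ln_div)
  finally show ?thesis by simp
qed

lemma le_ln_Inf_div_Sup:
  fixes A B :: "real set"
  assumes "A \<noteq> {}" "B \<noteq> {}" and pos: "\<And>a. a \<in> B \<Longrightarrow> 0 < a" "\<And>b. b \<in> A \<Longrightarrow> 0 < b"
    and bound: "\<And>a b. a \<in> B \<Longrightarrow> b \<in> A \<Longrightarrow> c \<le> ln b - ln a"
  shows "c \<le> ln (Inf A / Sup B)"
proof -
  have le: "a \<le> b / exp c" if "a \<in> B" "b \<in> A" for a b
  proof -
    have "exp c \<le> exp (ln b - ln a)" using bound[OF that] by simp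
    also have "\<dots> = b / a" using pos that by (simp add: exp_diff)
    finally show ?thesis using pos that by (simp add: field_simps)
  qed
  obtain a0 where "a0 \<in> B" using assms by blast
  obtain b0 where "b0 \<in> A" using assms by blast
  have "Sup B \<le> Inf A / exp c"
  proof (rule cSup_least[OF \<open>B \<noteq> {}\<close>])
    fix a assume "a \<in> B"
    have "a * exp c \<le> Inf A"
      using le[OF \<open>a \<in> B\<close>] by (intro cInf_greatest[OF \<open>A \<noteq> {}\<close>]) (simp add: field_simps)
    then show "a \<le> Inf A / exp c" by (simp add: field_simps)
  qed
  moreover have "0 < Sup B"
  proof -
    have "bdd_above B" using le[OF _ \<open>b0 \<in> A\<close>] by (rule bdd_aboveI)
    then have "a0 \<le> Sup B" using cSup_upper[OF \<open>a0 \<in> B\<close>] by blast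
    then show ?thesis using pos(1)[OF \<open>a0 \<in> B\<close>] by linarith
  qed
  ultimately have "exp c \<le> Inf A / Sup B" by (simp add: field_simps)
  then have "ln (exp c) \<le> ln (Inf A / Sup B)" by (rule ln_mono) simp
  then show ?thesis by simp
qed

lemma le_scaled_hilbert_dist:
  assumes scale: "\<And>c u. 0 < c \<Longrightarrow> u \<in> C \<Longrightarrow> (\<lambda>x. c * u x) \<in> C"
    and nz: "\<not> (AE x in \<rho>. g' x = 0)" and "0 < \<kappa>"
    and bound: "\<And>a b. 0 < a \<Longrightarrow> (\<lambda>x. g x - a * g' x) \<in> C
                  \<Longrightarrow> 0 < b \<Longrightarrow> (\<lambda>x. b * g' x - g x) \<in> C \<Longrightarrow> X \<le> ereal (\<kappa> * (ln b - ln a))"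
  shows "X \<le> ereal \<kappa> * hilbert_dist \<rho> C g g'"
proof (cases "cone_equiv C g g'")
  case False
  then show ?thesis using \<open>0 < \<kappa>\<close> by (simp add: hilbert_dist_def)
next
  case True
  define U where "U = {b. b > 0 \<and> (\<lambda>x. b * g' x - g x) \<in> C}"
  define L where "L = {a. a > 0 \<and> (\<lambda>x. g x - a * g' x) \<in> C}"
  obtain a0 b0 where "a0 \<in> L" "b0 \<in> U"
    using cone_equivE[OF scale True] unfolding U_def L_def by blast
  have dist: "hilbert_dist \<rho> C g g' = ereal (ln (Inf U / Sup L))"
    using True nz unfolding hilbert_dist_def hM_def hm_def U_def L_def by simp
  show ?thesis
  proof (cases X)
    case (real D)
    have "D / \<kappa> \<le> ln (Inf U / Sup L)"
    proof (rule le_ln_Inf_div_Sup)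
      fix a b assume "a \<in> L" "b \<in> U"
      then have "D \<le> \<kappa> * (ln b - ln a)" using bound real unfolding U_def L_def by simp
      then show "D / \<kappa> \<le> ln b - ln a" using \<open>0 < \<kappa>\<close> by (simp add: divide_le_eq mult.commute)
    qed (use \<open>a0 \<in> L\<close> \<open>b0 \<in> U\<close> in \<open>auto simp: U_def L_def\<close>)
    then show ?thesis using real dist \<open>0 < \<kappa>\<close> by (simp add: divide_le_eq mult.commute)
  next
    case PInf
    then show ?thesis using bound \<open>a0 \<in> L\<close> \<open>b0 \<in> U\<close> unfolding U_def L_def by fastforce
  qed simp
qed

section \<open>The cones\<close>

lemma L2_integrable: "finite_measure \<rho> \<Longrightarrow> L2 \<rho> f \<Longrightarrow> integrable \<rho> f"
  unfolding L2_def by (auto intro: finite_measure.square_integrable_imp_integrable)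

lemma L2_bounded:
  assumes "finite_measure \<rho>" "f \<in> borel_measurable \<rho>" "\<And>x. \<bar>f x\<bar> \<le> C"
  shows "L2 \<rho> f"
proof -
  have "integrable \<rho> (\<lambda>x. (f x)\<^sup>2)"
  proof (rule finite_measure.integrable_const_bound[OF assms(1), where B = "C\<^sup>2"])
    show "AE x in \<rho>. norm ((f x)\<^sup>2) \<le> C\<^sup>2"
      using power_mono[OF assms(3) abs_ge_zero, of _ 2] by (intro AE_I2) simp
  qed (use assms(2) in simp)
  then show ?thesis using assms(2) unfolding L2_def by simp
qed

lemma L2_cmult:
  assumes "L2 \<rho> f" shows "L2 \<rho> (\<lambda>x. c * f x)"
proof -
  have [measurable]: "f \<in> borel_measurable \<rho>" and "integrable \<rho> (\<lambda>x. (f x)\<^sup>2)"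
    using assms unfolding L2_def by auto
  moreover have "(\<lambda>x. c * f x) \<in> borel_measurable \<rho>" by measurable
  ultimately show ?thesis unfolding L2_def by (simp add: power_mult_distrib)
qed

lemma Bclosed_eq_cball: "Bclosed x0 r = cball x0 r"
  by (auto simp: Bclosed_def cball_def)

lemma Fcone_AE_nonneg_if_integral_nonpos:
  assumes "finite_measure \<rho>" "sets \<rho> = sets borel" "tail_fun \<alpha>'" "0 < m2"
    and f: "f \<in> Fcone x0 m1 m2 \<rho> \<alpha> \<alpha>'" and "(\<integral>x. f x \<partial>\<rho>) \<le> 0"
  shows "AE x in \<rho>. 0 \<le> f x"
proof -
  define S where "S = space \<rho> - Bclosed x0 m2"
  have "Bclosed x0 m2 \<in> sets \<rho>" unfolding Bclosed_eq_cball using assms(2) by simp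
  then have "S \<in> sets \<rho>" unfolding S_def by (rule sets.compl_sets)
  have "L2 \<rho> f" and inside: "AE x in \<rho>. x \<in> Bclosed x0 m2 \<longrightarrow> 0 \<le> f x"
    and tail: "(\<integral>x\<in>S. max (- f x) 0 \<partial>\<rho>) \<le> \<alpha>' m2 * (\<integral>x. f x \<partial>\<rho>)"
    using f unfolding Fcone_def S_def by auto
  then have "integrable \<rho> f" using L2_integrable assms(1) by blast
  define neg where "neg x = indicator S x *\<^sub>R max (- f x) 0" for x
  have "integrable \<rho> neg" unfolding neg_def
    using \<open>integrable \<rho> f\<close> \<open>S \<in> sets \<rho>\<close> by (intro integrable_mult_indicator) auto
  have "0 \<le> \<alpha>' m2" using assms(3,4) unfolding tail_fun_def by auto
  then have "\<alpha>' m2 * (\<integral>x. f x \<partial>\<rho>) \<le> 0" using assms(6) by (simp add: mult_nonneg_nonpos)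
  then have "(\<integral>x. neg x \<partial>\<rho>) \<le> 0"
    using tail unfolding neg_def set_lebesgue_integral_def by simp
  moreover have nonneg: "AE x in \<rho>. 0 \<le> neg x" by (intro AE_I2) (simp add: neg_def)
  then have "0 \<le> (\<integral>x. neg x \<partial>\<rho>)" by (rule integral_nonneg_AE)
  ultimately have "AE x in \<rho>. neg x = 0"
    using integral_nonneg_eq_0_iff_AE[OF \<open>integrable \<rho> neg\<close> nonneg] by simp
  then show ?thesis using inside AE_space
    by eventually_elim (auto simp: neg_def S_def split: split_indicator)
qed

lemma Fcone_integral_nonneg:
  assumes "finite_measure \<rho>" "sets \<rho> = sets borel" "tail_fun \<alpha>'" "0 < m2"
    and "f \<in> Fcone x0 m1 m2 \<rho> \<alpha> \<alpha>'"
  shows "0 \<le> (\<integral>x. f x \<partial>\<rho>)"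
proof (rule ccontr)
  assume "\<not> ?thesis"
  then have "AE x in \<rho>. 0 \<le> f x" using Fcone_AE_nonneg_if_integral_nonpos[OF assms] by simp
  with \<open>\<not> ?thesis\<close> show False using integral_nonneg_AE by blast
qed

lemma Fcone_AE_zero_if_integral_zero:
  assumes "finite_measure \<rho>" "sets \<rho> = sets borel" "tail_fun \<alpha>'" "0 < m2"
    and f: "f \<in> Fcone x0 m1 m2 \<rho> \<alpha> \<alpha>'" and "(\<integral>x. f x \<partial>\<rho>) = 0"
  shows "AE x in \<rho>. f x = 0"
proof -
  have "integrable \<rho> f" using f L2_integrable assms(1) unfolding Fcone_def by blast
  moreover have "AE x in \<rho>. 0 \<le> f x"
    using Fcone_AE_nonneg_if_integral_nonpos[OF assms(1-5)] assms(6) by simp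
  ultimately show ?thesis using integral_nonneg_eq_0_iff_AE assms(6) by blast
qed

lemma Fcone_cmult:
  assumes "0 < c" and f: "f \<in> Fcone x0 m1 m2 \<rho> \<alpha> \<alpha>'"
  shows "(\<lambda>x. c * f x) \<in> Fcone x0 m1 m2 \<rho> \<alpha> \<alpha>'"
proof -
  have max_cmult: "max (c * u) 0 = c * max u 0" for u
    using \<open>0 < c\<close> by (cases "0 \<le> u") (auto simp: max_def mult_le_0_iff)
  have "max (- (c * u)) 0 = c * max (- u) 0" for u using max_cmult[of "- u"] by simp
  then show ?thesis
    using f \<open>0 < c\<close> unfolding Fcone_def
    by (auto simp: max_cmult L2_cmult zero_le_mult_iff)
qed

lemma Gcone_cmult:
  assumes "0 \<le> c" and "g \<in> Gcone x0 m1 m2 \<rho> \<alpha> \<alpha>'"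
  shows "(\<lambda>x. c * g x) \<in> Gcone x0 m1 m2 \<rho> \<alpha> \<alpha>'"
proof -
  have "(\<integral>x. f x * (c * g x) \<partial>\<rho>) = c * (\<integral>x. f x * g x \<partial>\<rho>)" for f
    by (simp add: mult.left_commute)
  then show ?thesis using assms unfolding Gcone_def by (auto intro!: L2_cmult)
qed

lemma normalized_ball_indicator_in_Fcone:
  assumes "prob_space \<rho>" "sets \<rho> = sets borel" "0 < m1" "m1 \<le> m2" "tail_fun \<alpha>" "tail_fun \<alpha>'"
    and pos: "0 < measure \<rho> (Bclosed x0 m1)"
  shows "(\<lambda>x. indicator (Bclosed x0 m1) x / measure \<rho> (Bclosed x0 m1))
           \<in> normed \<rho> (Fcone x0 m1 m2 \<rho> \<alpha> \<alpha>')"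
proof -
  interpret prob_space \<rho> by fact
  define B where "B = Bclosed x0 m1"
  define f where "f x = indicator B x / measure \<rho> B" for x
  have [measurable]: "B \<in> sets \<rho>" unfolding B_def Bclosed_eq_cball using assms(2) by simp
  have "0 \<le> f x" for x unfolding f_def using pos B_def by simp
  have "space \<rho> = UNIV" using sets_eq_imp_space_eq[OF assms(2)] by simp
  then have "(\<integral>x. f x \<partial>\<rho>) = 1" unfolding f_def using pos B_def by simp
  have "L2 \<rho> f"
  proof (rule L2_bounded[where C = "1 / measure \<rho> B"])
    show "f \<in> borel_measurable \<rho>" unfolding f_def by measurable
    show "\<bar>f x\<bar> \<le> 1 / measure \<rho> B" for x
      unfolding f_def using pos B_def by (simp split: split_indicator)
  qed (rule finite_measure_axioms)
  moreover have "(\<integral>x\<in>space \<rho> - Bclosed x0 r. max (f x) 0 \<partial>\<rho>) = 0" if "m1 \<le> r" for r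
  proof -
    have "B \<subseteq> Bclosed x0 r" unfolding B_def Bclosed_def using that by auto
    then have zero: "indicator (space \<rho> - Bclosed x0 r) x *\<^sub>R max (f x) 0 = 0" for x
      unfolding f_def by (auto split: split_indicator)
    show ?thesis unfolding set_lebesgue_integral_def zero by simp
  qed
  moreover have "(\<integral>x\<in>space \<rho> - Bclosed x0 r. max (- f x) 0 \<partial>\<rho>) = 0" for r
    using \<open>\<And>x. 0 \<le> f x\<close> unfolding set_lebesgue_integral_def by simp
  moreover have "0 \<le> \<alpha> r" "0 \<le> \<alpha>' r'" if "m1 \<le> r" "m2 \<le> r'" for r r'
    using assms(3-6) that unfolding tail_fun_def by auto
  ultimately show ?thesis
    using \<open>(\<integral>x. f x \<partial>\<rho>) = 1\<close> \<open>\<And>x. 0 \<le> f x\<close> assms(4)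
    unfolding normed_def Fcone_def f_def B_def by auto
qed

section \<open>The integral operator\<close>

locale bounded_kernel =
  fixes \<nu> :: "'a::topological_space measure" and K :: "'a \<Rightarrow> 'a \<Rightarrow> real"
  assumes prob_space_nu: "prob_space \<nu>" and sets_nu: "sets \<nu> = sets borel"
    and K_measurable: "(\<lambda>(x, y). K x y) \<in> borel_measurable (borel \<Otimes>\<^sub>M borel)"
    and K_bounds: "\<And>x y. 0 < K x y \<and> K x y \<le> 1"
begin

lemma kernel_section_measurable: "(\<lambda>y. K y x) \<in> borel_measurable \<nu>"
proof -
  note K_measurable[measurable]
  have "(\<lambda>y. K y x) \<in> borel_measurable borel" by measurable
  then show ?thesis using measurable_cong_sets[OF sets_nu refl] by blast
qed

lemma abs_kernel_mult_le: "\<bar>K y x * g y\<bar> \<le> \<bar>g y\<bar>"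
  using K_bounds[of y x] by (auto simp: abs_mult intro!: mult_left_le_one_le)

lemma integrable_kernel_mult:
  assumes "integrable \<nu> g" shows "integrable \<nu> (\<lambda>y. K y x * g y)"
proof (rule Bochner_Integration.integrable_bound[OF integrable_abs[OF assms]])
  show "(\<lambda>y. K y x * g y) \<in> borel_measurable \<nu>"
    using assms kernel_section_measurable by (intro borel_measurable_times) auto
  show "AE y in \<nu>. norm (K y x * g y) \<le> norm \<bar>g y\<bar>"
    using abs_kernel_mult_le by (intro AE_I2) simp
qed

lemma abs_LKT_le:
  assumes "integrable \<nu> g" shows "\<bar>LKT K \<nu> g x\<bar> \<le> (\<integral>y. \<bar>g y\<bar> \<partial>\<nu>)"
proof -
  have "\<bar>LKT K \<nu> g x\<bar> \<le> (\<integral>y. \<bar>K y x * g y\<bar> \<partial>\<nu>)"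
    unfolding LKT_def by (rule integral_abs_bound)
  also have "\<dots> \<le> (\<integral>y. \<bar>g y\<bar> \<partial>\<nu>)"
    using integrable_kernel_mult[OF assms] assms abs_kernel_mult_le by (intro integral_mono) auto
  finally show ?thesis .
qed

lemma LKT_measurable:
  assumes "sets \<mu> = sets borel" and "g \<in> borel_measurable \<nu>"
  shows "LKT K \<nu> g \<in> borel_measurable \<mu>"
proof -
  interpret prob_space \<nu> by (rule prob_space_nu)
  note K_measurable[measurable]
  have [measurable]: "g \<in> borel_measurable borel"
    using assms(2) measurable_cong_sets[OF sets_nu refl] by blast
  have "(\<lambda>(x, y). K y x * g y) \<in> borel_measurable (borel \<Otimes>\<^sub>M borel)" by measurable
  moreover have "sets (\<mu> \<Otimes>\<^sub>M \<nu>) = sets (borel \<Otimes>\<^sub>M borel)"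
    using sets_pair_measure_cong[OF assms(1) sets_nu] .
  ultimately have "(\<lambda>(x, y). K y x * g y) \<in> borel_measurable (\<mu> \<Otimes>\<^sub>M \<nu>)"
    using measurable_cong_sets by blast
  then show ?thesis
    unfolding LKT_def by (intro borel_measurable_lebesgue_integral) simp
qed

lemma LKT_diff:
  assumes "integrable \<nu> g" "integrable \<nu> g'"
  shows "LKT K \<nu> (\<lambda>y. a * g y - b * g' y) x = a * LKT K \<nu> g x - b * LKT K \<nu> g' x"
proof -
  have "(\<lambda>y. K y x * (a * g y - b * g' y)) = (\<lambda>y. a * (K y x * g y) - b * (K y x * g' y))"
    by (simp add: algebra_simps)
  then show ?thesis
    unfolding LKT_def using integrable_kernel_mult[OF assms(1)] integrable_kernel_mult[OF assms(2)]
    by simp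
qed

lemma LKT_cmult: "LKT K \<nu> (\<lambda>y. c * g y) x = c * LKT K \<nu> g x"
  unfolding LKT_def by (simp add: mult.left_commute)

lemma LKT_AE_zero: "AE y in \<nu>. g y = 0 \<Longrightarrow> LKT K \<nu> g x = 0"
  unfolding LKT_def by (intro integral_eq_zero_AE) auto

end

section \<open>Contraction of Hilbert's metric\<close>

locale cone_contraction = bounded_kernel \<nu> K
  for \<nu> :: "'a::metric_space measure" and K +
  fixes \<mu> :: "'a measure" and x0 :: 'a and m1 m2 :: real
    and \<alpha>1 \<alpha>1' \<alpha>2 \<alpha>2' :: "real \<Rightarrow> real" and c1 c2 :: real
  assumes prob_space_mu: "prob_space \<mu>" and sets_mu: "sets \<mu> = sets borel"
    and radii: "0 < m1" "m1 \<le> m2"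
    and tails: "tail_fun \<alpha>1" "tail_fun \<alpha>1'"
    and ball_pos: "0 < measure \<mu> (Bclosed x0 m1)"
    and Gnu_integral_pos:
      "\<And>g. g \<in> nonzero \<nu> (Gcone x0 m1 m2 \<nu> \<alpha>2 \<alpha>2') \<Longrightarrow> 0 < (\<integral>x. g x \<partial>\<nu>)"
    and constants: "0 < c1" "c1 \<le> c2"
    and normed_pairing_bounds:
      "\<And>f g. f \<in> normed \<mu> (Fcone x0 m1 m2 \<mu> \<alpha>1 \<alpha>1')
         \<Longrightarrow> g \<in> normed \<nu> (Gcone x0 m1 m2 \<nu> \<alpha>2 \<alpha>2')
         \<Longrightarrow> c1 \<le> (\<integral>x. LKT K \<nu> g x * f x \<partial>\<mu>) \<and> (\<integral>x. LKT K \<nu> g x * f x \<partial>\<mu>) \<le> c2"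
begin

abbreviation "F\<mu> \<equiv> Fcone x0 m1 m2 \<mu> \<alpha>1 \<alpha>1'"
abbreviation "G\<mu> \<equiv> Gcone x0 m1 m2 \<mu> \<alpha>1 \<alpha>1'"
abbreviation "G\<nu> \<equiv> Gcone x0 m1 m2 \<nu> \<alpha>2 \<alpha>2'"
abbreviation "pairing f g \<equiv> \<integral>x. LKT K \<nu> g x * f x \<partial>\<mu>"
abbreviation "\<kappa> \<equiv> 1 - c1\<^sup>2 / (2 * c2\<^sup>2)"

lemma contraction_rate_bounds: "0 < \<kappa>" "\<kappa> < 1"
proof -
  have "0 < c2" using constants by linarith
  have "c1\<^sup>2 \<le> c2\<^sup>2" using constants by (intro power_mono) auto
  then have "c1\<^sup>2 / (2 * c2\<^sup>2) \<le> 1 / 2" using \<open>0 < c2\<close> by (simp add: pos_divide_le_eq)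
  moreover have "0 < c1\<^sup>2 / (2 * c2\<^sup>2)" using constants \<open>0 < c2\<close> by simp
  ultimately show "0 < \<kappa>" "\<kappa> < 1" by linarith+
qed

lemma finite_measure_mu: "finite_measure \<mu>"
  using prob_space_mu by (simp add: prob_space_def)

lemma finite_measure_nu: "finite_measure \<nu>"
  using prob_space_nu by (simp add: prob_space_def)

lemma m2_pos: "0 < m2"
  using radii by linarith

lemma Gnu_integrable: "u \<in> G\<nu> \<Longrightarrow> integrable \<nu> u"
  using L2_integrable[OF finite_measure_nu] unfolding Gcone_def by blast

lemma Gnu_integral_nonneg:
  assumes "u \<in> G\<nu>" shows "0 \<le> (\<integral>x. u x \<partial>\<nu>)"
proof (cases "AE x in \<nu>. u x = 0")
  case True
  then show ?thesis by (simp add: integral_eq_zero_AE)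
next
  case False
  then show ?thesis using Gnu_integral_pos[of u] assms unfolding nonzero_def by fastforce
qed

lemma Fmu_integrable: "f \<in> F\<mu> \<Longrightarrow> integrable \<mu> f"
  using L2_integrable[OF finite_measure_mu] unfolding Fcone_def by blast

lemma Fmu_integral_nonneg: "f \<in> F\<mu> \<Longrightarrow> 0 \<le> (\<integral>x. f x \<partial>\<mu>)"
  using Fcone_integral_nonneg[OF finite_measure_mu sets_mu tails(2) m2_pos] .

lemma LKT_Gnu_measurable: "u \<in> G\<nu> \<Longrightarrow> LKT K \<nu> u \<in> borel_measurable \<mu>"
  using LKT_measurable[OF sets_mu] Gnu_integrable by blast

lemma pairing_integrable:
  assumes u: "u \<in> G\<nu>" and f: "f \<in> F\<mu>"
  shows "integrable \<mu> (\<lambda>x. LKT K \<nu> u x * f x)"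
proof (rule Bochner_Integration.integrable_bound)
  define N where "N = (\<integral>y. \<bar>u y\<bar> \<partial>\<nu>)"
  show "integrable \<mu> (\<lambda>x. N * f x)" using Fmu_integrable[OF f] by simp
  show "(\<lambda>x. LKT K \<nu> u x * f x) \<in> borel_measurable \<mu>"
    using LKT_Gnu_measurable[OF u] Fmu_integrable[OF f] by (intro borel_measurable_times) auto
  have "\<bar>LKT K \<nu> u x\<bar> \<le> \<bar>N\<bar>" for x
    unfolding N_def using abs_LKT_le[OF Gnu_integrable[OF u]] abs_ge_self order_trans by blast
  then show "AE x in \<mu>. norm (LKT K \<nu> u x * f x) \<le> norm (N * f x)"
    by (intro AE_I2) (auto simp: abs_mult intro!: mult_right_mono)
qed

lemma L2_LKT_diff:
  assumes u: "u \<in> G\<nu>" and u': "u' \<in> G\<nu>"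
  shows "L2 \<mu> (\<lambda>x. a * LKT K \<nu> u x - b * LKT K \<nu> u' x)"
proof (rule L2_bounded[OF finite_measure_mu])
  define N where "N v = (\<integral>y. \<bar>v y\<bar> \<partial>\<nu>)" for v :: "'a \<Rightarrow> real"
  have [measurable]: "LKT K \<nu> u \<in> borel_measurable \<mu>" "LKT K \<nu> u' \<in> borel_measurable \<mu>"
    using LKT_Gnu_measurable u u' by auto
  show "(\<lambda>x. a * LKT K \<nu> u x - b * LKT K \<nu> u' x) \<in> borel_measurable \<mu>" by measurable
  fix x
  have "\<bar>a * LKT K \<nu> u x - b * LKT K \<nu> u' x\<bar> \<le> \<bar>a\<bar> * \<bar>LKT K \<nu> u x\<bar> + \<bar>b\<bar> * \<bar>LKT K \<nu> u' x\<bar>"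
    using abs_triangle_ineq4[of "a * LKT K \<nu> u x" "b * LKT K \<nu> u' x"] by (simp add: abs_mult)
  also have "\<dots> \<le> \<bar>a\<bar> * N u + \<bar>b\<bar> * N u'"
    using abs_LKT_le[OF Gnu_integrable[OF u], of x] abs_LKT_le[OF Gnu_integrable[OF u'], of x]
    unfolding N_def by (intro add_mono mult_left_mono) auto
  finally show "\<bar>a * LKT K \<nu> u x - b * LKT K \<nu> u' x\<bar> \<le> \<bar>a\<bar> * N u + \<bar>b\<bar> * N u'" .
qed

lemma integral_mult_LKT_diff:
  assumes "u \<in> G\<nu>" "u' \<in> G\<nu>" "f \<in> F\<mu>"
  shows "(\<integral>x. f x * (a * LKT K \<nu> u x - b * LKT K \<nu> u' x) \<partial>\<mu>)
    = a * pairing f u - b * pairing f u'"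
proof -
  have "(\<lambda>x. f x * (a * LKT K \<nu> u x - b * LKT K \<nu> u' x))
      = (\<lambda>x. a * (LKT K \<nu> u x * f x) - b * (LKT K \<nu> u' x * f x))" by (auto simp: algebra_simps)
  then show ?thesis using pairing_integrable assms by simp
qed

lemma pairing_diff:
  assumes "u \<in> G\<nu>" "u' \<in> G\<nu>" "f \<in> F\<mu>"
  shows "pairing f (\<lambda>y. a * u y - b * u' y) = a * pairing f u - b * pairing f u'"
  using integral_mult_LKT_diff[OF assms, of a b, symmetric]
  by (simp add: LKT_diff Gnu_integrable assms mult.commute)

lemma LKT_diff_in_Gmu_iff:
  assumes "u \<in> G\<nu>" "u' \<in> G\<nu>"
  shows "(\<lambda>x. a * LKT K \<nu> u x - b * LKT K \<nu> u' x) \<in> G\<mu>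
    \<longleftrightarrow> (\<forall>f\<in>F\<mu>. b * pairing f u' \<le> a * pairing f u)"
  using L2_LKT_diff[OF assms] integral_mult_LKT_diff[OF assms] unfolding Gcone_def by auto

lemma pairing_sandwich:
  assumes u: "u \<in> G\<nu>" and f: "f \<in> F\<mu>"
  shows "c1 * (\<integral>y. u y \<partial>\<nu>) * (\<integral>x. f x \<partial>\<mu>) \<le> pairing f u
    \<and> pairing f u \<le> c2 * (\<integral>y. u y \<partial>\<nu>) * (\<integral>x. f x \<partial>\<mu>)"
proof -
  define i where "i = (\<integral>y. u y \<partial>\<nu>)"
  define s where "s = (\<integral>x. f x \<partial>\<mu>)"
  consider "AE y in \<nu>. u y = 0" | "AE x in \<mu>. f x = 0" | "0 < i" "0 < s"
  proof -
    have "0 < i" if "\<not> (AE y in \<nu>. u y = 0)"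
      using Gnu_integral_pos u that unfolding nonzero_def i_def by blast
    moreover have "0 < s" if "\<not> (AE x in \<mu>. f x = 0)"
      using Fcone_AE_zero_if_integral_zero[OF finite_measure_mu sets_mu tails(2) m2_pos f]
        Fmu_integral_nonneg[OF f] that unfolding s_def by fastforce
    ultimately show thesis using that by blast
  qed
  then show ?thesis
  proof cases
    case 1
    then show ?thesis by (simp add: LKT_AE_zero integral_eq_zero_AE)
  next
    case 2
    then have "AE x in \<mu>. LKT K \<nu> u x * f x = 0" by eventually_elim simp
    with 2 show ?thesis by (simp add: integral_eq_zero_AE)
  next
    case 3
    have "(\<lambda>y. (1 / i) * u y) \<in> normed \<nu> G\<nu>"
      using Gcone_cmult[OF _ u, of "1 / i"] 3 unfolding normed_def i_def by simp
    moreover have "(\<lambda>x. (1 / s) * f x) \<in> normed \<mu> F\<mu>"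
      using Fcone_cmult[OF _ f, of "1 / s"] 3 unfolding normed_def s_def by simp
    moreover have "pairing (\<lambda>x. (1 / s) * f x) (\<lambda>y. (1 / i) * u y) = pairing f u / (i * s)"
      unfolding LKT_cmult by simp
    ultimately have "c1 \<le> pairing f u / (i * s) \<and> pairing f u / (i * s) \<le> c2"
      using normed_pairing_bounds by metis
    then show ?thesis using 3 unfolding i_def[symmetric] s_def[symmetric]
      by (simp add: pos_le_divide_eq pos_divide_le_eq mult.commute mult.left_commute)
  qed
qed

lemma LKT_in_Gmu:
  assumes "u \<in> G\<nu>" shows "LKT K \<nu> u \<in> G\<mu>"
proof -
  have "0 \<le> pairing f u" if "f \<in> F\<mu>" for f
  proof -
    have "0 \<le> c1 * (\<integral>y. u y \<partial>\<nu>) * (\<integral>x. f x \<partial>\<mu>)"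
      using constants Gnu_integral_nonneg[OF assms] Fmu_integral_nonneg[OF that] by simp
    then show ?thesis using pairing_sandwich[OF assms that] by linarith
  qed
  then show ?thesis using LKT_diff_in_Gmu_iff[OF assms assms, of 1 0] by simp
qed

lemma pairing_pos:
  assumes g: "g \<in> nonzero \<nu> G\<nu>" and f: "f \<in> normed \<mu> F\<mu>"
  shows "0 < pairing f g"
proof -
  have "0 < c1 * (\<integral>y. g y \<partial>\<nu>)" using constants Gnu_integral_pos[OF g] by simp
  also have "\<dots> \<le> pairing f g"
    using pairing_sandwich[of g f] g f unfolding nonzero_def normed_def by simp
  finally show ?thesis .
qed

lemma pairing_ratio_bounds:
  assumes g: "g \<in> G\<nu>" and g': "g' \<in> nonzero \<nu> G\<nu>" and "0 < a"
    and lower: "(\<lambda>y. g y - a * g' y) \<in> G\<nu>" and upper: "(\<lambda>y. b * g' y - g y) \<in> G\<nu>"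
  obtains \<alpha> \<beta> where "0 < \<alpha>" "ln \<beta> - ln \<alpha> \<le> \<kappa> * (ln b - ln a)"
    and "\<And>f. f \<in> F\<mu> \<Longrightarrow> \<alpha> * pairing f g' \<le> pairing f g \<and> pairing f g \<le> \<beta> * pairing f g'"
proof -
  have "g' \<in> G\<nu>" and "0 < (\<integral>y. g' y \<partial>\<nu>)"
    using g' Gnu_integral_pos unfolding nonzero_def by auto
  define t where "t = (\<integral>y. g y - a * g' y \<partial>\<nu>)"
  define w where "w = (\<integral>y. b * g' y - g y \<partial>\<nu>)"
  have "0 \<le> t" "0 \<le> w"
    unfolding t_def w_def using lower upper by (simp_all add: Gnu_integral_nonneg)
  moreover have "t + w = (b - a) * (\<integral>y. g' y \<partial>\<nu>)"
    unfolding t_def w_def using Gnu_integrable[OF g] Gnu_integrable[OF \<open>g' \<in> G\<nu>\<close>]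
    by (simp add: algebra_simps)
  ultimately have "0 \<le> (b - a) * (\<integral>y. g' y \<partial>\<nu>)" "a < b \<Longrightarrow> 0 < t + w"
    using \<open>0 < (\<integral>y. g' y \<partial>\<nu>)\<close> by simp_all
  then have "a \<le> b" "a < b \<Longrightarrow> 0 < t + w"
    using \<open>0 < (\<integral>y. g' y \<partial>\<nu>)\<close> by (simp_all add: zero_le_mult_iff)
  then obtain \<alpha> \<beta> where "0 < \<alpha>" "ln \<beta> - ln \<alpha> \<le> \<kappa> * (ln b - ln a)"
    and ratio: "\<And>p q s. 0 \<le> s \<Longrightarrow> c1 * t * s \<le> p - a * q \<Longrightarrow> p - a * q \<le> c2 * t * s
      \<Longrightarrow> c1 * w * s \<le> b * q - p \<Longrightarrow> b * q - p \<le> c2 * w * s \<Longrightarrow> \<alpha> * q \<le> p \<and> p \<le> \<beta> * q"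
    using birkhoff_ratio_bounds[OF constants \<open>0 < a\<close> _ \<open>0 \<le> t\<close> \<open>0 \<le> w\<close>] by blast
  moreover have "\<alpha> * pairing f g' \<le> pairing f g \<and> pairing f g \<le> \<beta> * pairing f g'"
    if f: "f \<in> F\<mu>" for f
  proof (rule ratio[OF Fmu_integral_nonneg[OF f]])
    have "pairing f (\<lambda>y. g y - a * g' y) = pairing f g - a * pairing f g'"
      using pairing_diff[OF g \<open>g' \<in> G\<nu>\<close> f, of 1 a] by simp
    then show "c1 * t * (\<integral>x. f x \<partial>\<mu>) \<le> pairing f g - a * pairing f g'"
      "pairing f g - a * pairing f g' \<le> c2 * t * (\<integral>x. f x \<partial>\<mu>)"
      using pairing_sandwich[OF lower f] unfolding t_def by simp_all
    have "pairing f (\<lambda>y. b * g' y - g y) = b * pairing f g' - pairing f g"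
      using pairing_diff[OF \<open>g' \<in> G\<nu>\<close> g f, of b 1] by simp
    then show "c1 * w * (\<integral>x. f x \<partial>\<mu>) \<le> b * pairing f g' - pairing f g"
      "b * pairing f g' - pairing f g \<le> c2 * w * (\<integral>x. f x \<partial>\<mu>)"
      using pairing_sandwich[OF upper f] unfolding w_def by simp_all
  qed
  ultimately show thesis using that by blast
qed

lemma LKT_hilbert_dist_le:
  assumes g: "g \<in> G\<nu>" and g': "g' \<in> nonzero \<nu> G\<nu>" and "0 < a"
    and "(\<lambda>y. g y - a * g' y) \<in> G\<nu>" and "(\<lambda>y. b * g' y - g y) \<in> G\<nu>"
  shows "hilbert_dist \<mu> G\<mu> (LKT K \<nu> g) (LKT K \<nu> g') \<le> ereal (\<kappa> * (ln b - ln a))"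
proof -
  have "g' \<in> G\<nu>" using g' unfolding nonzero_def by simp
  obtain \<alpha> \<beta> where "0 < \<alpha>" and rate: "ln \<beta> - ln \<alpha> \<le> \<kappa> * (ln b - ln a)"
    and ratio: "\<And>f. f \<in> F\<mu> \<Longrightarrow> \<alpha> * pairing f g' \<le> pairing f g \<and> pairing f g \<le> \<beta> * pairing f g'"
    using pairing_ratio_bounds[OF assms] by blast
  obtain f0 where f0: "f0 \<in> normed \<mu> F\<mu>"
    using normalized_ball_indicator_in_Fcone[OF prob_space_mu sets_mu radii tails ball_pos] by blast
  then have "f0 \<in> F\<mu>" unfolding normed_def by simp
  have "0 < pairing f0 g'" using pairing_pos[OF g' f0] .
  define Lg where "Lg = LKT K \<nu> g"
  define Lg' where "Lg' = LKT K \<nu> g'"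
  have lower_iff:
    "(\<lambda>x. Lg x - a' * Lg' x) \<in> G\<mu> \<longleftrightarrow> (\<forall>f\<in>F\<mu>. a' * pairing f g' \<le> pairing f g)" for a'
    using LKT_diff_in_Gmu_iff[OF g \<open>g' \<in> G\<nu>\<close>, of 1 a'] unfolding Lg_def Lg'_def by simp
  have upper_iff:
    "(\<lambda>x. b' * Lg' x - Lg x) \<in> G\<mu> \<longleftrightarrow> (\<forall>f\<in>F\<mu>. pairing f g \<le> b' * pairing f g')" for b'
    using LKT_diff_in_Gmu_iff[OF \<open>g' \<in> G\<nu>\<close> g, of b' 1] unfolding Lg_def Lg'_def by simp
  \<comment> \<open>testing against the fixed \<open>f0\<close> separates the admissible lower from the upper ratios\<close>
  have "hilbert_dist \<mu> G\<mu> Lg Lg' \<le> ereal (ln \<beta> - ln \<alpha>)"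
  proof (rule hilbert_dist_le_ln_ratio[where r = "pairing f0 g / pairing f0 g'"])
    show "(\<lambda>x. c * u x) \<in> G\<mu>" if "0 < c" "u \<in> G\<mu>" for c u
      using that by (intro Gcone_cmult) simp_all
    show "\<not> (AE x in \<mu>. Lg' x = 0)"
    proof
      assume "AE x in \<mu>. Lg' x = 0"
      then have "AE x in \<mu>. Lg' x * f0 x = 0" by eventually_elim simp
      then have "pairing f0 g' = 0" unfolding Lg'_def by (rule integral_eq_zero_AE)
      with \<open>0 < pairing f0 g'\<close> show False by simp
    qed
    show "0 < \<alpha>" by fact
    show "(\<lambda>x. Lg x - \<alpha> * Lg' x) \<in> G\<mu>" "(\<lambda>x. \<beta> * Lg' x - Lg x) \<in> G\<mu>"
      using ratio lower_iff upper_iff by simp_all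
    show "a' \<le> pairing f0 g / pairing f0 g'" if "(\<lambda>x. Lg x - a' * Lg' x) \<in> G\<mu>" for a'
      using that lower_iff \<open>f0 \<in> F\<mu>\<close> \<open>0 < pairing f0 g'\<close> by (simp add: pos_le_divide_eq)
    show "pairing f0 g / pairing f0 g' \<le> b'" if "(\<lambda>x. b' * Lg' x - Lg x) \<in> G\<mu>" for b'
      using that upper_iff \<open>f0 \<in> F\<mu>\<close> \<open>0 < pairing f0 g'\<close> by (simp add: pos_divide_le_eq)
  qed
  then show ?thesis using rate unfolding Lg_def Lg'_def by (simp add: order_trans)
qed

theorem LKT_contraction:
  assumes g: "g \<in> nonzero \<nu> G\<nu>" and g': "g' \<in> nonzero \<nu> G\<nu>"
  shows "hilbert_dist \<mu> G\<mu> (LKT K \<nu> g) (LKT K \<nu> g') \<le> ereal \<kappa> * hilbert_dist \<nu> G\<nu> g g'"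
proof (rule le_scaled_hilbert_dist)
  show "(\<lambda>x. c * u x) \<in> G\<nu>" if "0 < c" "u \<in> G\<nu>" for c u
    using that by (intro Gcone_cmult) simp_all
  show "\<not> (AE x in \<nu>. g' x = 0)" using g' unfolding nonzero_def by simp
  show "0 < \<kappa>" by (rule contraction_rate_bounds)
  show "hilbert_dist \<mu> G\<mu> (LKT K \<nu> g) (LKT K \<nu> g') \<le> ereal (\<kappa> * (ln b - ln a))"
    if "0 < a" "(\<lambda>x. g x - a * g' x) \<in> G\<nu>" "0 < b" "(\<lambda>x. b * g' x - g x) \<in> G\<nu>" for a b
    using LKT_hilbert_dist_le[OF _ g' that(1,2,4)] g unfolding nonzero_def by simp
qed

end

lemma INF_INF_ereal_pos_imp_lower_bound:
  assumes "0 < (INF x\<in>X. INF y\<in>Y. ereal (F x y))"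
  obtains c where "0 < c" "\<And>x y. x \<in> X \<Longrightarrow> y \<in> Y \<Longrightarrow> c \<le> F x y"
proof -
  obtain c where "0 < ereal c" and c: "ereal c < (INF x\<in>X. INF y\<in>Y. ereal (F x y))"
    using ereal_dense2[OF assms] by blast
  moreover have "c \<le> F x y" if "x \<in> X" "y \<in> Y" for x y
  proof -
    have "(INF x\<in>X. INF y\<in>Y. ereal (F x y)) \<le> ereal (F x y)"
      by (rule INF_lower2[OF that(1)], rule INF_lower2[OF that(2)]) simp
    with c have "ereal c < ereal (F x y)" by (rule order.strict_trans2)
    then show ?thesis by simp
  qed
  ultimately show thesis using that by simp
qed

lemma SUP_SUP_ereal_finite_imp_upper_bound:
  assumes "(SUP x\<in>X. SUP y\<in>Y. ereal (F x y)) < \<infinity>"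
  obtains C where "\<And>x y. x \<in> X \<Longrightarrow> y \<in> Y \<Longrightarrow> F x y \<le> C"
proof -
  obtain C where C: "(SUP x\<in>X. SUP y\<in>Y. ereal (F x y)) < ereal C"
    using ereal_dense2[OF assms] by blast
  have "F x y \<le> C" if "x \<in> X" "y \<in> Y" for x y
  proof -
    have "ereal (F x y) \<le> (SUP x\<in>X. SUP y\<in>Y. ereal (F x y))"
      by (rule SUP_upper2[OF that(1)], rule SUP_upper2[OF that(2)]) simp
    then have "ereal (F x y) < ereal C" using C by (rule order.strict_trans1)
    then show ?thesis by simp
  qed
  then show thesis by (rule that)
qed

theorem lemma4p3:
  fixes \<mu> \<nu> :: "'a::polish_space measure" and x0 :: 'a
    and m1 m2 :: real and K :: "'a \<Rightarrow> 'a \<Rightarrow> real"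
    and \<alpha>1 \<alpha>1' \<alpha>2 \<alpha>2' :: "real \<Rightarrow> real"
  assumes "prob_space \<mu>" and "sets \<mu> = sets borel"
    and "prob_space \<nu>" and "sets \<nu> = sets borel"
    and "0 < m1" and "m1 \<le> m2"
    and "(\<lambda>(x, y). K x y) \<in> borel_measurable (borel \<Otimes>\<^sub>M borel)"
    and "\<And>x y. 0 < K x y \<and> K x y \<le> 1"
    and "tail_fun \<alpha>1" and "tail_fun \<alpha>1'" and "tail_fun \<alpha>2" and "tail_fun \<alpha>2'"
    and "measure \<mu> (Bclosed x0 m1) > 0" and "measure \<nu> (Bclosed x0 m1) > 0"
    and "\<And>r. r > 0 \<Longrightarrow> \<alpha>1 r > 0" and "\<And>r. r > 0 \<Longrightarrow> \<alpha>2 r > 0"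
    and "\<And>g. g \<in> nonzero \<nu> (Gcone x0 m1 m2 \<nu> \<alpha>2 \<alpha>2') \<Longrightarrow> (\<integral>x. g x \<partial>\<nu>) > 0"
    and "(INF f\<in>normed \<mu> (Fcone x0 m1 m2 \<mu> \<alpha>1 \<alpha>1').
           INF g\<in>normed \<nu> (Gcone x0 m1 m2 \<nu> \<alpha>2 \<alpha>2').
             ereal (\<integral>x. LKT K \<nu> g x * f x \<partial>\<mu>)) > 0"
    and "(SUP f\<in>normed \<mu> (Fcone x0 m1 m2 \<mu> \<alpha>1 \<alpha>1').
           SUP g\<in>normed \<nu> (Gcone x0 m1 m2 \<nu> \<alpha>2 \<alpha>2').
             ereal (\<integral>x. LKT K \<nu> g x * f x \<partial>\<mu>)) < \<infinity>"
  shows "\<exists>\<kappa>::real. 0 < \<kappa> \<and> \<kappa> < 1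
    \<and> (\<forall>g\<in>nonzero \<nu> (Gcone x0 m1 m2 \<nu> \<alpha>2 \<alpha>2'). LKT K \<nu> g \<in> Gcone x0 m1 m2 \<mu> \<alpha>1 \<alpha>1')
    \<and> (\<forall>g\<in>nonzero \<nu> (Gcone x0 m1 m2 \<nu> \<alpha>2 \<alpha>2'). \<forall>g'\<in>nonzero \<nu> (Gcone x0 m1 m2 \<nu> \<alpha>2 \<alpha>2').
         hilbert_dist \<mu> (Gcone x0 m1 m2 \<mu> \<alpha>1 \<alpha>1') (LKT K \<nu> g) (LKT K \<nu> g')
           \<le> ereal \<kappa> * hilbert_dist \<nu> (Gcone x0 m1 m2 \<nu> \<alpha>2 \<alpha>2') g g')"
proof -
  obtain c1 where "0 < c1" and lower: "\<And>f g. f \<in> normed \<mu> (Fcone x0 m1 m2 \<mu> \<alpha>1 \<alpha>1')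
      \<Longrightarrow> g \<in> normed \<nu> (Gcone x0 m1 m2 \<nu> \<alpha>2 \<alpha>2') \<Longrightarrow> c1 \<le> (\<integral>x. LKT K \<nu> g x * f x \<partial>\<mu>)"
    using INF_INF_ereal_pos_imp_lower_bound[OF assms(18)] by blast
  obtain C where upper: "\<And>f g. f \<in> normed \<mu> (Fcone x0 m1 m2 \<mu> \<alpha>1 \<alpha>1')
      \<Longrightarrow> g \<in> normed \<nu> (Gcone x0 m1 m2 \<nu> \<alpha>2 \<alpha>2') \<Longrightarrow> (\<integral>x. LKT K \<nu> g x * f x \<partial>\<mu>) \<le> C"
    using SUP_SUP_ereal_finite_imp_upper_bound[OF assms(19)] by blast
  have bounds: "c1 \<le> (\<integral>x. LKT K \<nu> g x * f x \<partial>\<mu>) \<and> (\<integral>x. LKT K \<nu> g x * f x \<partial>\<mu>) \<le> max C c1"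
    if "f \<in> normed \<mu> (Fcone x0 m1 m2 \<mu> \<alpha>1 \<alpha>1')" "g \<in> normed \<nu> (Gcone x0 m1 m2 \<nu> \<alpha>2 \<alpha>2')"
    for f g
    using lower[OF that] upper[OF that] by (simp add: le_max_iff_disj)
  interpret cone_contraction \<nu> K \<mu> x0 m1 m2 \<alpha>1 \<alpha>1' \<alpha>2 \<alpha>2' c1 "max C c1"
    by (rule cone_contraction.intro[OF bounded_kernel.intro[OF assms(3,4,7,8)]
          cone_contraction_axioms.intro[OF assms(1,2,5,6,9,10,13,17) \<open>0 < c1\<close>
            max.cobounded2 bounds]])
  show ?thesis
    using contraction_rate_bounds LKT_in_Gmu LKT_contraction unfolding nonzero_def by blast
qed

end
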